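(* Let $p$ be an odd prime. For every simple rank $3$ $\mathbb{Z}_p$-invariant matroid structure on $\mathbb{Z}_p$ there exists a distinct difference system $S_1,\ldots,S_k$ in $\mathbb{Z}_p$ such that the bases of the matroid are exactly the $3$-element subsets of $\mathbb{Z}_p$ which are not a translate of a subset of any $S_i$.
   Context: For an abelian group $A$, subsets $S_1,\ldots,S_k \subseteq A$ form a distinct difference system if: (i) for any $i,j$ and any $x,y \in S_i$, $z,w \in S_j$ with $x \neq y$ and $z \neq w$, the equation $x-y=z-w$ implies $x=z$ and $y=w$; (ii) each $S_i$ contains $0$ and at least one other element; (iii) $S_i \cap S_j = \{0\}$ for $i \neq j$. $\mathbb{Z}_p$ acts on itself by translation; a matroid on $\mathbb{Z}_p$ is $\mathbb{Z}_p$-invariant if translates of bases are bases. A matroid is simple if every circuit has at least three elements. A translate of a set $T$ is a set $\{t+a : t \in T\}$. *)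

theory Defs
  imports "HOL-Computational_Algebra.Primes"
begin

text \<open>Z_p is modelled as the set {0..<p} of integers with arithmetic mod p.\<close>

definition Zp :: "int \<Rightarrow> int set" where
  "Zp p = {0..<p}"

definition translate :: "int \<Rightarrow> int set \<Rightarrow> int \<Rightarrow> int set" where
  "translate p T a = {(t + a) mod p | t. t \<in> T}"

definition matroid_bases :: "'a set \<Rightarrow> 'a set set \<Rightarrow> bool" where
  "matroid_bases E \<B> \<longleftrightarrow> finite E \<and> \<B> \<noteq> {} \<and> (\<forall>B\<in>\<B>. B \<subseteq> E) \<and>
     (\<forall>B1\<in>\<B>. \<forall>B2\<in>\<B>. \<forall>x\<in>B1 - B2. \<exists>y\<in>B2 - B1. insert y (B1 - {x}) \<in> \<B>)"

definition indep :: "'a set set \<Rightarrow> 'a set \<Rightarrow> bool" where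
  "indep \<B> I \<longleftrightarrow> (\<exists>B\<in>\<B>. I \<subseteq> B)"

definition circuit :: "'a set \<Rightarrow> 'a set set \<Rightarrow> 'a set \<Rightarrow> bool" where
  "circuit E \<B> C \<longleftrightarrow> C \<subseteq> E \<and> \<not> indep \<B> C \<and> (\<forall>D. D \<subset> C \<longrightarrow> indep \<B> D)"

definition simple_matroid :: "'a set \<Rightarrow> 'a set set \<Rightarrow> bool" where
  "simple_matroid E \<B> \<longleftrightarrow> (\<forall>C. circuit E \<B> C \<longrightarrow> card C \<ge> 3)"

definition matroid_rank_eq :: "'a set set \<Rightarrow> nat \<Rightarrow> bool" where
  "matroid_rank_eq \<B> r \<longleftrightarrow> (\<forall>B\<in>\<B>. card B = r)"

definition Zp_invariant :: "int \<Rightarrow> int set set \<Rightarrow> bool" where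
  "Zp_invariant p \<B> \<longleftrightarrow> (\<forall>B\<in>\<B>. \<forall>a\<in>Zp p. translate p B a \<in> \<B>)"

definition distinct_difference_system :: "int \<Rightarrow> nat \<Rightarrow> (nat \<Rightarrow> int set) \<Rightarrow> bool" where
  "distinct_difference_system p k S \<longleftrightarrow>
     (\<forall>i<k. S i \<subseteq> Zp p) \<and>
     (\<forall>i<k. \<forall>j<k. \<forall>x\<in>S i. \<forall>y\<in>S i. \<forall>z\<in>S j. \<forall>w\<in>S j.
        x \<noteq> y \<longrightarrow> z \<noteq> w \<longrightarrow> (x - y) mod p = (z - w) mod p \<longrightarrow> x = z \<and> y = w) \<and>
     (\<forall>i<k. 0 \<in> S i \<and> (\<exists>x\<in>S i. x \<noteq> 0)) \<and>
     (\<forall>i<k. \<forall>j<k. i \<noteq> j \<longrightarrow> S i \<inter> S j = {0})"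

end

theory Submission
  imports Defs "HOL-Number_Theory.Cong"
begin

text \<open>
  In a simple matroid of rank 3 the non-bases among the 3-subsets are exactly the triples
  contained in a line, the line through distinct points x and y being x, y together with all
  z for which {x, y, z} is dependent; two distinct lines share at most one point.
  Translations permute the lines, and since p is prime a line through 0 is fixed by no nonzero
  translation (it would otherwise be all of Z_p and contain a basis).
  Choose one line through 0 in each translation class of lines; these are the sets S_i.
  If x - y = z - w with x, y in S_i and z, w in S_j, then translating S_j by x - z gives a
  line through x and y, that is S_i; hence i = j, the translation fixes S_i, so x = z and y = w.
\<close>

lemma translate_eq_image: "translate p T a = (\<lambda>t. (t + a) mod p) ` T"
  by (auto simp: translate_def)

lemma mod_in_Zp: "0 < p \<Longrightarrow> x mod p \<in> Zp p"
  by (simp add: Zp_def)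

lemma Zp_mod_eq: "x \<in> Zp p \<Longrightarrow> x mod p = x"
  by (simp add: Zp_def)

lemma Zp_eq_if_dvd_diff: "x \<in> Zp p \<Longrightarrow> y \<in> Zp p \<Longrightarrow> p dvd x - y \<Longrightarrow> x = y"
  by (metis mod_eq_dvd_iff Zp_mod_eq)

lemma translate_subset_Zp: "0 < p \<Longrightarrow> translate p T a \<subseteq> Zp p"
  by (auto simp: translate_eq_image mod_in_Zp)

lemma translate_mod: "translate p T (a mod p) = translate p T a"
  by (simp add: translate_eq_image mod_add_right_eq)

lemma translate_translate: "translate p (translate p T a) b = translate p T (a + b)"
  by (simp add: translate_eq_image image_image mod_add_left_eq add.assoc)

lemma translate_0: "T \<subseteq> Zp p \<Longrightarrow> translate p T 0 = T"
  by (auto simp: translate_eq_image Zp_mod_eq subset_eq)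

lemma translate_inverse: "T \<subseteq> Zp p \<Longrightarrow> translate p (translate p T a) (- a) = T"
  by (simp add: translate_translate translate_0)

lemma bij_betw_shift_Zp:
  assumes "0 < p"
  shows "bij_betw (\<lambda>t. (t + a) mod p) (Zp p) (Zp p)"
proof (rule bij_betw_imageI)
  show "inj_on (\<lambda>t. (t + a) mod p) (Zp p)"
  proof (rule inj_onI)
    fix x y assume "x \<in> Zp p" "y \<in> Zp p" "(x + a) mod p = (y + a) mod p"
    then have "p dvd x - y"
      using mod_eq_dvd_iff[of "x + a" p "y + a"] by simp
    then show "x = y"
      using \<open>x \<in> Zp p\<close> \<open>y \<in> Zp p\<close> by (rule Zp_eq_if_dvd_diff[rotated 2])
  qed
  show "(\<lambda>t. (t + a) mod p) ` Zp p = Zp p"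
  proof
    show "(\<lambda>t. (t + a) mod p) ` Zp p \<subseteq> Zp p"
      using assms by (auto simp: mod_in_Zp)
    show "Zp p \<subseteq> (\<lambda>t. (t + a) mod p) ` Zp p"
    proof
      fix z assume "z \<in> Zp p"
      then have "z = ((z - a) mod p + a) mod p"
        by (simp add: mod_add_left_eq Zp_mod_eq)
      then show "z \<in> (\<lambda>t. (t + a) mod p) ` Zp p"
        using assms by (blast intro: mod_in_Zp)
    qed
  qed
qed

lemma translation_invariant_subset_Zp:
  fixes p t :: int
  assumes "prime p" "\<not> p dvd t" "0 \<in> T" "translate p T t = T"
  shows "T = Zp p"
proof -
  have "T \<subseteq> Zp p"
    using assms(4) translate_subset_Zp[of p T t] prime_gt_0_int[OF assms(1)] by simp
  have multiples: "translate p T (int n * t) = T" for n :: nat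
  proof (induction n)
    case 0
    show ?case using translate_0[OF \<open>T \<subseteq> Zp p\<close>] by simp
  next
    case (Suc n)
    have "translate p T (int (Suc n) * t) = translate p (translate p T (int n * t)) t"
      by (simp add: translate_translate algebra_simps)
    then show ?case using Suc.IH assms(4) by simp
  qed
  have "coprime t p"
    using assms(1,2) prime_imp_coprime_int by (metis coprime_commute)
  then obtain u where u: "[t * u = 1] (mod p)"
    using cong_solve_coprime_int by blast
  have "z \<in> T" if z: "z \<in> Zp p" for z
  proof -
    define n where "n = nat ((z * u) mod p)"
    have "(int n * t) mod p = (z * (t * u)) mod p"
      using prime_gt_0_int[OF assms(1)] by (simp add: n_def mod_mult_right_eq ac_simps)
    also have "\<dots> = z"
      using u z by (metis cong_def cong_scalar_left mult.right_neutral Zp_mod_eq)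
    finally have "translate p T z = translate p T ((int n * t) mod p)"
      by simp
    then have "translate p T z = translate p T (int n * t)"
      by (simp only: translate_mod)
    then have "translate p T z = T"
      using multiples[of n] by simp
    moreover have "(0 + z) mod p \<in> translate p T z"
      using assms(3) unfolding translate_eq_image by (rule imageI)
    ultimately show "z \<in> T"
      using z by (simp add: Zp_mod_eq)
  qed
  then show ?thesis using \<open>T \<subseteq> Zp p\<close> by blast
qed

definition translates :: "int \<Rightarrow> int set \<Rightarrow> int set set" where
  "translates p L = range (translate p L)"

lemma translates_translate: "translates p (translate p L a) = translates p L"
proof
  have "translate p (translate p L a) b \<in> translates p L" for b
    unfolding translates_def translate_translate by (rule rangeI)
  then show "translates p (translate p L a) \<subseteq> translates p L"
    by (auto simp: translates_def)
  have "translate p L b = translate p (translate p L a) (b - a)" for b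
    by (simp add: translate_translate)
  then show "translates p L \<subseteq> translates p (translate p L a)"
    unfolding translates_def by (metis rangeI image_subsetI)
qed

lemma mem_translates_self: "L \<subseteq> Zp p \<Longrightarrow> L \<in> translates p L"
  using translate_0[of L p] by (auto simp: translates_def)

definition distinct_difference_family :: "int \<Rightarrow> int set set \<Rightarrow> bool" where
  "distinct_difference_family p R \<longleftrightarrow>
     (\<forall>M\<in>R. M \<subseteq> Zp p) \<and>
     (\<forall>M\<in>R. \<forall>M'\<in>R. \<forall>x\<in>M. \<forall>y\<in>M. \<forall>z\<in>M'. \<forall>w\<in>M'.
        x \<noteq> y \<longrightarrow> z \<noteq> w \<longrightarrow> (x - y) mod p = (z - w) mod p \<longrightarrow> x = z \<and> y = w) \<and>
     (\<forall>M\<in>R. 0 \<in> M \<and> (\<exists>x\<in>M. x \<noteq> 0)) \<and>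
     (\<forall>M\<in>R. \<forall>M'\<in>R. M \<noteq> M' \<longrightarrow> M \<inter> M' = {0})"

lemma distinct_difference_system_iff_family:
  assumes "inj_on S {..<k}"
  shows "distinct_difference_system p k S \<longleftrightarrow> distinct_difference_family p (S ` {..<k})"
  using assms unfolding distinct_difference_system_def distinct_difference_family_def
  by (simp add: inj_on_eq_iff lessThan_def)

lemma simple_matroid_indep_pair:
  assumes "simple_matroid E \<B>" "\<B> \<noteq> {}" "x \<in> E" "y \<in> E"
  shows "indep \<B> {x, y}"
proof -
  have indep_empty: "indep \<B> {}"
    using assms(2) by (auto simp: indep_def)
  have indep_singleton: "indep \<B> {z}" if "z \<in> E" for z
  proof (rule ccontr)
    assume "\<not> indep \<B> {z}"
    then have "circuit E \<B> {z}"
      using that indep_empty by (auto simp: circuit_def subset_singleton_iff)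
    then show False
      using assms(1) by (fastforce simp: simple_matroid_def)
  qed
  show ?thesis
  proof (rule ccontr)
    assume "\<not> indep \<B> {x, y}"
    moreover have "D = {} \<or> D = {x} \<or> D = {y}" if "D \<subset> {x, y}" for D
      using that by auto
    ultimately have "circuit E \<B> {x, y}"
      using assms(3,4) indep_empty indep_singleton by (auto simp: circuit_def)
    moreover have "card {x, y} < 3"
      by (cases "x = y") simp_all
    ultimately show False
      using assms(1) by (auto simp: simple_matroid_def)
  qed
qed

locale rank3_simple_matroid =
  fixes E :: "'a set" and \<B> :: "'a set set"
  assumes matroid: "matroid_bases E \<B>"
    and simple: "simple_matroid E \<B>"
    and rank3: "matroid_rank_eq \<B> 3"
begin

lemma bases_nonempty: "\<B> \<noteq> {}"
  using matroid by (simp add: matroid_bases_def)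

lemma basis_subset: "X \<in> \<B> \<Longrightarrow> X \<subseteq> E"
  using matroid by (auto simp: matroid_bases_def)

lemma basis_card: "X \<in> \<B> \<Longrightarrow> card X = 3"
  using rank3 by (simp add: matroid_rank_eq_def)

lemma basis_exchange:
  "B1 \<in> \<B> \<Longrightarrow> B2 \<in> \<B> \<Longrightarrow> x \<in> B1 - B2 \<Longrightarrow> \<exists>y\<in>B2 - B1. insert y (B1 - {x}) \<in> \<B>"
  using matroid by (simp add: matroid_bases_def)

lemma pair_extends_to_basis:
  assumes "x \<in> E" "y \<in> E" "x \<noteq> y"
  obtains z where "{x, y, z} \<in> \<B>"
proof -
  obtain X where X: "X \<in> \<B>" "{x, y} \<subseteq> X"
    using simple_matroid_indep_pair[OF simple bases_nonempty assms(1,2)] by (auto simp: indep_def)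
  have "finite X"
    using basis_card[OF X(1)] by (simp add: card_ge_0_finite)
  then have "card (X - {x, y}) = 1"
    using X basis_card assms(3) by (simp add: card_Diff_subset)
  then obtain z where "X - {x, y} = {z}"
    by (auto simp: card_1_singleton_iff)
  then have "X = {x, y, z}"
    using X(2) by blast
  then show ?thesis
    using X(1) that by simp
qed

lemma nonbasis_triple_trans:
  assumes "a \<in> E" "b \<in> E" "a \<noteq> b" "{a, b, c} \<notin> \<B>" "{a, b, d} \<notin> \<B>"
  shows "{a, c, d} \<notin> \<B>"
proof
  assume acd: "{a, c, d} \<in> \<B>"
  obtain e where abe: "{a, b, e} \<in> \<B>"
    using pair_extends_to_basis[OF assms(1-3)] .
  have "e \<noteq> a" "e \<noteq> b"
    using basis_card[OF abe] by (auto simp: card_insert_if split: if_splits)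
  moreover have "e \<noteq> c" "e \<noteq> d"
    using abe assms(4,5) by auto
  ultimately obtain y where "y \<in> {a, c, d} - {a, b, e}" "insert y ({a, b, e} - {e}) \<in> \<B>"
    using basis_exchange[OF abe acd, of e] by auto
  moreover have "{a, b, e} - {e} = {a, b}"
    using \<open>e \<noteq> a\<close> \<open>e \<noteq> b\<close> by auto
  ultimately show False
    using assms(4,5) by (auto simp: insert_commute)
qed

definition line :: "'a \<Rightarrow> 'a \<Rightarrow> 'a set" where
  "line x y = {z \<in> E. z = x \<or> z = y \<or> {x, y, z} \<notin> \<B>}"

definition is_line :: "'a set \<Rightarrow> bool" where
  "is_line L \<longleftrightarrow> (\<exists>x\<in>E. \<exists>y\<in>E. x \<noteq> y \<and> L = line x y)"

lemma line_subset: "line x y \<subseteq> E"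
  by (auto simp: line_def)

lemma left_mem_line: "x \<in> E \<Longrightarrow> x \<in> line x y"
  by (simp add: line_def)

lemma right_mem_line: "y \<in> E \<Longrightarrow> y \<in> line x y"
  by (simp add: line_def)

lemma line_commute: "line x y = line y x"
  by (auto simp: line_def insert_commute)

lemma line_subset_line:
  assumes "x \<in> E" "u \<in> line x y" "u \<noteq> x"
  shows "line x u \<subseteq> line x y"
proof
  fix z assume z: "z \<in> line x u"
  show "z \<in> line x y"
  proof (rule ccontr)
    assume "z \<notin> line x y"
    then have "z \<noteq> y" "{x, y, z} \<in> \<B>" "u \<noteq> y"
      using z by (auto simp: line_def)
    then have "{x, u, y} \<notin> \<B>" "{x, u, z} \<notin> \<B>"
      using assms(2,3) z \<open>z \<notin> line x y\<close> by (auto simp: line_def insert_commute)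
    then have "{x, y, z} \<notin> \<B>"
      using nonbasis_triple_trans[of x u y z] assms line_subset by blast
    with \<open>{x, y, z} \<in> \<B>\<close> show False by contradiction
  qed
qed

lemma line_eq_if_mem_line:
  assumes "x \<in> E" "y \<in> E" "x \<noteq> y" "u \<in> line x y" "u \<noteq> x"
  shows "line x u = line x y"
proof
  show "line x u \<subseteq> line x y"
    using line_subset_line assms by blast
  have "y \<in> line x u"
    using assms(2,4,5) by (auto simp: line_def insert_commute)
  then show "line x y \<subseteq> line x u"
    using line_subset_line assms by blast
qed

lemma is_line_eq_line:
  assumes "is_line L" "u \<in> L" "v \<in> L" "u \<noteq> v"
  shows "L = line u v"
proof -
  obtain x y where xy: "x \<in> E" "y \<in> E" "x \<noteq> y" "L = line x y"
    using assms(1) by (auto simp: is_line_def)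
  show ?thesis
  proof (cases "u = x")
    case True
    then show ?thesis
      using line_eq_if_mem_line[of x y v] xy assms(3,4) by simp
  next
    case False
    have "u \<in> E"
      using assms(2) xy(4) line_subset by blast
    have "L = line u x"
      using line_eq_if_mem_line[of x y u] xy assms(2) False by (simp add: line_commute)
    then show ?thesis
      using line_eq_if_mem_line[of u x v] \<open>u \<in> E\<close> xy(1) False assms(3,4) by simp
  qed
qed

lemma lines_eq_if_two_common_points:
  assumes "is_line L" "is_line M" "u \<in> L \<inter> M" "v \<in> L \<inter> M" "u \<noteq> v"
  shows "L = M"
  using is_line_eq_line assms by (metis IntD1 IntD2)

lemma is_line_subset: "is_line L \<Longrightarrow> L \<subseteq> E"
  using line_subset by (auto simp: is_line_def)

lemma is_line_point_neq:
  assumes "is_line L"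
  obtains x where "x \<in> L" "x \<noteq> a"
  using assms left_mem_line right_mem_line by (auto simp: is_line_def) metis

lemma basis_not_subset_line:
  assumes "is_line L" "X \<in> \<B>"
  shows "\<not> X \<subseteq> L"
proof
  assume "X \<subseteq> L"
  obtain a b c where abc: "X = {a, b, c}" "a \<noteq> b" "b \<noteq> c" "a \<noteq> c"
    using basis_card[OF assms(2)] by (auto simp: card_3_iff)
  have "c \<in> line a b"
    using is_line_eq_line[OF assms(1), of a b] \<open>X \<subseteq> L\<close> abc by auto
  then have "{a, b, c} \<notin> \<B>"
    using abc by (simp add: line_def)
  with assms(2) abc(1) show False by simp
qed

lemma image_line:
  assumes f: "bij_betw f E E" and \<B>: "\<And>X. X \<subseteq> E \<Longrightarrow> f ` X \<in> \<B> \<longleftrightarrow> X \<in> \<B>"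
    and "x \<in> E" "y \<in> E"
  shows "f ` line x y = line (f x) (f y)"
proof -
  have mem: "f z \<in> line (f x) (f y) \<longleftrightarrow> z \<in> line x y" if "z \<in> E" for z
  proof -
    have "f z = f x \<longleftrightarrow> z = x" "f z = f y \<longleftrightarrow> z = y"
      using f that assms(3,4) by (auto simp: bij_betw_def inj_on_eq_iff)
    moreover have "{f x, f y, f z} \<in> \<B> \<longleftrightarrow> {x, y, z} \<in> \<B>"
      using \<B>[of "{x, y, z}"] that assms(3,4) by simp
    ultimately show ?thesis
      using f that by (auto simp: line_def bij_betw_def)
  qed
  show ?thesis
  proof
    show "f ` line x y \<subseteq> line (f x) (f y)"
      using mem line_subset by blast
    show "line (f x) (f y) \<subseteq> f ` line x y"
    proof
      fix w assume w: "w \<in> line (f x) (f y)"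
      then obtain z where "z \<in> E" "w = f z"
        using f line_subset by (metis bij_betw_imp_surj_on imageE subsetD)
      then show "w \<in> f ` line x y"
        using mem w by blast
    qed
  qed
qed

lemma is_line_image:
  assumes f: "bij_betw f E E" and \<B>: "\<And>X. X \<subseteq> E \<Longrightarrow> f ` X \<in> \<B> \<longleftrightarrow> X \<in> \<B>"
    and "is_line L"
  shows "is_line (f ` L)"
proof -
  obtain x y where "x \<in> E" "y \<in> E" "x \<noteq> y" "L = line x y"
    using assms(3) by (auto simp: is_line_def)
  moreover have "f x \<noteq> f y" "f x \<in> E" "f y \<in> E"
    using f calculation by (auto simp: bij_betw_def inj_on_eq_iff)
  ultimately show ?thesis
    using image_line[OF f \<B>] by (auto simp: is_line_def)
qed

end

locale translation_invariant_rank3_matroid = rank3_simple_matroid "Zp p" \<B>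
  for p :: int and \<B> :: "int set set" +
  assumes prime: "prime p"
    and invariant: "Zp_invariant p \<B>"
begin

lemma p_pos: "0 < p"
  using prime by (simp add: prime_gt_0_int)

lemma translate_basis_iff:
  assumes "X \<subseteq> Zp p"
  shows "translate p X a \<in> \<B> \<longleftrightarrow> X \<in> \<B>"
proof
  have invariant': "translate p Y b \<in> \<B>" if "Y \<in> \<B>" for Y b
    using invariant that mod_in_Zp[OF p_pos, of b] translate_mod[of p Y b]
    unfolding Zp_invariant_def by metis
  show "X \<in> \<B> \<Longrightarrow> translate p X a \<in> \<B>"
    by (rule invariant')
  show "translate p X a \<in> \<B> \<Longrightarrow> X \<in> \<B>"
    using invariant'[of "translate p X a" "- a"] translate_inverse[OF assms] by simp
qed

lemma is_line_translate: "is_line L \<Longrightarrow> is_line (translate p L a)"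
  using is_line_image[OF bij_betw_shift_Zp[OF p_pos]] translate_basis_iff
  by (simp add: translate_eq_image)

lemma translate_line_eq_self_dvd:
  assumes "is_line L" "0 \<in> L" "translate p L t = L"
  shows "p dvd t"
proof (rule ccontr)
  assume "\<not> p dvd t"
  then have "L = Zp p"
    using translation_invariant_subset_Zp[OF prime _ assms(2,3)] by simp
  moreover obtain X where "X \<in> \<B>"
    using bases_nonempty by blast
  ultimately show False
    using basis_not_subset_line[OF assms(1)] basis_subset by blast
qed

definition lines_through_0 :: "int set set" where
  "lines_through_0 = {L. is_line L \<and> 0 \<in> L}"

definition base_line :: "int set \<Rightarrow> int set" where
  "base_line L = (SOME M. M \<in> lines_through_0 \<and> translates p M = translates p L)"

definition base_lines :: "int set set" where
  "base_lines = base_line ` lines_through_0"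

lemma
  assumes "L \<in> lines_through_0"
  shows base_line_mem: "base_line L \<in> lines_through_0"
    and translates_base_line: "translates p (base_line L) = translates p L"
  using someI[of "\<lambda>M. M \<in> lines_through_0 \<and> translates p M = translates p L" L] assms
  by (simp_all add: base_line_def)

lemma base_lines_subset: "base_lines \<subseteq> lines_through_0"
  using base_line_mem by (auto simp: base_lines_def)

lemma base_line_idem:
  assumes "M \<in> base_lines"
  shows "base_line M = M"
proof -
  obtain L where L: "L \<in> lines_through_0" "M = base_line L"
    using assms by (auto simp: base_lines_def)
  then have "translates p M = translates p L"
    using translates_base_line by simp
  then show ?thesis
    using L by (simp add: base_line_def)
qed

lemma base_lines_translate_eq:
  assumes "M \<in> base_lines" "M' \<in> base_lines" "M' = translate p M a"
  shows "M' = M"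
proof -
  have "translates p M' = translates p M"
    using assms(3) translates_translate by simp
  then have "base_line M' = base_line M"
    by (simp add: base_line_def)
  then show ?thesis
    using base_line_idem assms(1,2) by simp
qed

lemma line_translate_of_base_line:
  assumes "is_line L"
  obtains M a where "M \<in> base_lines" "a \<in> Zp p" "L = translate p M a"
proof -
  obtain x where x: "x \<in> L"
    using assms left_mem_line by (auto simp: is_line_def)
  define L0 where "L0 = translate p L (- x)"
  have "(x + - x) mod p \<in> L0"
    using x unfolding L0_def translate_eq_image by (rule imageI)
  then have L0: "L0 \<in> lines_through_0"
    using is_line_translate[OF assms] by (simp add: lines_through_0_def L0_def)
  define M where "M = base_line L0"
  have "M \<in> base_lines"
    using L0 by (simp add: base_lines_def M_def)
  have "L0 \<in> translates p M"
    using translates_base_line[OF L0] mem_translates_self is_line_subset L0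
    by (simp add: lines_through_0_def M_def)
  then obtain b where "L0 = translate p M b"
    by (auto simp: translates_def)
  moreover have "L = translate p L0 x"
    using translate_inverse[OF is_line_subset[OF assms], of "- x"] by (simp add: L0_def)
  ultimately have "L = translate p M ((b + x) mod p)"
    by (simp add: translate_translate translate_mod)
  then show ?thesis
    using that \<open>M \<in> base_lines\<close> mod_in_Zp[OF p_pos] by blast
qed

lemma finite_base_lines: "finite base_lines"
proof (rule finite_subset)
  show "base_lines \<subseteq> Pow (Zp p)"
    using base_lines_subset is_line_subset by (auto simp: lines_through_0_def)
qed (simp add: Zp_def)

lemma base_linesD:
  assumes "M \<in> base_lines"
  shows "is_line M" "0 \<in> M" "M \<subseteq> Zp p"
  using assms base_lines_subset is_line_subset by (auto simp: lines_through_0_def)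

lemma base_lines_inter:
  assumes "M \<in> base_lines" "M' \<in> base_lines" "M \<noteq> M'"
  shows "M \<inter> M' = {0}"
  using lines_eq_if_two_common_points[of M M' 0] base_linesD assms by blast

lemma base_lines_distinct_differences:
  assumes M: "M \<in> base_lines" "x \<in> M" "y \<in> M" "x \<noteq> y"
    and M': "M' \<in> base_lines" "z \<in> M'" "w \<in> M'" "z \<noteq> w"
    and eq: "(x - y) mod p = (z - w) mod p"
  shows "x = z \<and> y = w"
proof -
  have Zp: "x \<in> Zp p" "y \<in> Zp p" "z \<in> Zp p" "w \<in> Zp p"
    using M M' base_linesD(3) by blast+
  define t where "t = x - z"
  have "(z + t) mod p = x"
    using Zp by (simp add: t_def Zp_mod_eq)
  moreover have "(w + t) mod p = y mod p"
    using eq by (simp add: t_def mod_eq_dvd_iff algebra_simps)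
  then have "(w + t) mod p = y"
    using Zp(2) by (simp add: Zp_mod_eq)
  ultimately have "x \<in> translate p M' t" "y \<in> translate p M' t"
    using M'(2,3) by (auto simp: translate_eq_image)
  then have "M = translate p M' t"
    using lines_eq_if_two_common_points[of M "translate p M' t" x y]
      base_linesD(1) is_line_translate M M' by blast
  moreover from this have "M = M'"
    by (rule base_lines_translate_eq[OF M'(1) M(1)])
  ultimately have "translate p M t = M"
    by simp
  then have "p dvd x - z"
    using translate_line_eq_self_dvd base_linesD[OF M(1)] by (simp add: t_def)
  then have "x = z"
    using Zp by (simp add: Zp_eq_if_dvd_diff)
  moreover have "p dvd w - y"
    using eq \<open>x = z\<close> by (simp add: mod_eq_dvd_iff)
  ultimately show ?thesis
    using Zp Zp_eq_if_dvd_diff[of w p y] by simp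
qed

lemma distinct_difference_family_base_lines: "distinct_difference_family p base_lines"
  unfolding distinct_difference_family_def
proof (intro conjI ballI impI)
  fix M assume "M \<in> base_lines"
  then show "M \<subseteq> Zp p" "0 \<in> M" "\<exists>x\<in>M. x \<noteq> 0"
    using base_linesD is_line_point_neq by (blast, blast, metis)
next
  fix M M' assume "M \<in> base_lines" "M' \<in> base_lines" "M \<noteq> M'"
  then show "M \<inter> M' = {0}"
    by (rule base_lines_inter)
next
  fix M M' x y z w
  assume "M \<in> base_lines" "M' \<in> base_lines" "x \<in> M" "y \<in> M" "z \<in> M'" "w \<in> M'"
    "x \<noteq> y" "z \<noteq> w" "(x - y) mod p = (z - w) mod p"
  then show "x = z" "y = w"
    using base_lines_distinct_differences by blast+
qed

lemma basis_iff_base_lines: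
  "X \<in> \<B> \<longleftrightarrow>
     X \<subseteq> Zp p \<and> card X = 3 \<and> \<not> (\<exists>M\<in>base_lines. \<exists>T\<subseteq>M. \<exists>a\<in>Zp p. X = translate p T a)"
proof
  assume X: "X \<in> \<B>"
  have "\<not> (\<exists>M\<in>base_lines. \<exists>T\<subseteq>M. \<exists>a\<in>Zp p. X = translate p T a)"
  proof
    assume "\<exists>M\<in>base_lines. \<exists>T\<subseteq>M. \<exists>a\<in>Zp p. X = translate p T a"
    then obtain M T a where M: "M \<in> base_lines" and "T \<subseteq> M" "X = translate p T a"
      by blast
    then have "X \<subseteq> translate p M a"
      by (auto simp: translate_def)
    then show False
      using basis_not_subset_line[OF is_line_translate[OF base_linesD(1)[OF M]] X] by blast
  qed
  then show "X \<subseteq> Zp p \<and> card X = 3 \<and> \<not> (\<exists>M\<in>base_lines. \<exists>T\<subseteq>M. \<exists>a\<in>Zp p. X = translate p T a)"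
    using basis_subset[OF X] basis_card[OF X] by blast
next
  assume X: "X \<subseteq> Zp p \<and> card X = 3 \<and> \<not> (\<exists>M\<in>base_lines. \<exists>T\<subseteq>M. \<exists>a\<in>Zp p. X = translate p T a)"
  show "X \<in> \<B>"
  proof (rule ccontr)
    assume "X \<notin> \<B>"
    obtain a b c where abc: "X = {a, b, c}" "a \<noteq> b"
      using X by (auto simp: card_3_iff)
    then have "is_line (line a b)" "X \<subseteq> line a b"
      using X \<open>X \<notin> \<B>\<close> by (auto simp: is_line_def line_def)
    then obtain M d where "M \<in> base_lines" "d \<in> Zp p" "X \<subseteq> translate p M d"
      using line_translate_of_base_line by metis
    moreover from this obtain T where "T \<subseteq> M" "X = translate p T d"
      unfolding translate_eq_image subset_image_iff by blast
    ultimately show False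
      using X by blast
  qed
qed

end

theorem theorem3p28:
  fixes p :: int and \<B> :: "int set set"
  assumes "prime p" and "odd p"
    and "matroid_bases (Zp p) \<B>"
    and "simple_matroid (Zp p) \<B>"
    and "matroid_rank_eq \<B> 3"
    and "Zp_invariant p \<B>"
  shows "\<exists>k S. distinct_difference_system p k S \<and>
           (\<forall>B. B \<in> \<B> \<longleftrightarrow>
              (B \<subseteq> Zp p \<and> card B = 3 \<and>
               \<not> (\<exists>i<k. \<exists>T\<subseteq>S i. \<exists>a\<in>Zp p. B = translate p T a)))"
proof -
  interpret translation_invariant_rank3_matroid p \<B>
    using assms by unfold_locales
  define k where "k = card base_lines"
  obtain S where "bij_betw S {..<k} base_lines"
    using ex_bij_betw_nat_finite[OF finite_base_lines] by (auto simp: k_def atLeast0LessThan)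
  then have S: "inj_on S {..<k}" "base_lines = S ` {..<k}"
    by (simp_all add: bij_betw_def)
  have "distinct_difference_system p k S"
    using distinct_difference_system_iff_family[OF S(1)] distinct_difference_family_base_lines S(2)
    by simp
  moreover have "B \<in> \<B> \<longleftrightarrow>
      B \<subseteq> Zp p \<and> card B = 3 \<and> \<not> (\<exists>i<k. \<exists>T\<subseteq>S i. \<exists>a\<in>Zp p. B = translate p T a)" for B
    using basis_iff_base_lines[of B] S(2) by (simp add: lessThan_def)
  ultimately show ?thesis
    by blast
qed

end
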